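(* Assume $K$ is a field and $\tau_{(i)}\neq0$, $\eta_{(i)}\neq0$ for all $i\in\Omega$. Then $\mathbf{P}$ is hierarchical if and only if for all $B,D\in\mathcal{I}(\overline{\mathbf{P}})$, $|B|=|D|$ implies $\deg(\pi(\Omega,B))=\deg(\pi(\Omega,D))$.
   Context: $\Omega$ is a finite set and $\mathbf{P}=(\Omega,\preccurlyeq_{\mathbf{P}})$ a poset; $\overline{\mathbf{P}}$ is the dual poset and $\mathcal{I}(\overline{\mathbf{P}})$ its set of ideals (up-closed subsets of $\mathbf{P}$). For $Y\subseteq\Omega$: $\max(Y)$ is the set of maximal elements of $Y$ w.r.t. $\preccurlyeq_{\mathbf{P}}$; $\mathcal{I}(Y)$ is the set of down-closed subsets of $Y$. $\tau,\eta\in K^{\Omega}$. For $D,I\subseteq\Omega$, $\varphi(D,I)=(-1)^{|I\cap D|}\big(\prod_{i\in I-\max(I)}\tau_{(i)}\big)\big(\prod_{i\in\max(I)-D}\eta_{(i)}\big)$ if $I\cap D\subseteq\max(I)$, and $0$ otherwise; for $D\subseteq Y\subseteq\Omega$, $\pi(Y,D)=\sum_{I\in\mathcal{I}(Y)}\varphi(D,I)x^{|I|}\in K[x]$. $\mathrm{len}(y)$ is the largest cardinality of a chain in $\mathbf{P}$ with greatest element $y$; $\mathbf{P}$ is hierarchical if $\mathrm{len}(u)+1\leqslant\mathrm{len}(v)$ implies $u\preccurlyeq_{\mathbf{P}}v$. *)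

theory Defs
  imports "HOL-Computational_Algebra.Polynomial"
begin

definition is_poset :: "'a set \<Rightarrow> ('a \<Rightarrow> 'a \<Rightarrow> bool) \<Rightarrow> bool" where
  "is_poset Omega le \<longleftrightarrow>
     (\<forall>x\<in>Omega. le x x) \<and>
     (\<forall>x\<in>Omega. \<forall>y\<in>Omega. le x y \<and> le y x \<longrightarrow> x = y) \<and>
     (\<forall>x\<in>Omega. \<forall>y\<in>Omega. \<forall>z\<in>Omega. le x y \<and> le y z \<longrightarrow> le x z)"

definition maxs :: "('a \<Rightarrow> 'a \<Rightarrow> bool) \<Rightarrow> 'a set \<Rightarrow> 'a set" where
  "maxs le Y = {y \<in> Y. \<forall>z\<in>Y. le y z \<longrightarrow> z = y}"

definition down_closed_subsets :: "('a \<Rightarrow> 'a \<Rightarrow> bool) \<Rightarrow> 'a set \<Rightarrow> 'a set set" where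
  "down_closed_subsets le Y = {I. I \<subseteq> Y \<and> (\<forall>i\<in>I. \<forall>j\<in>Y. le j i \<longrightarrow> j \<in> I)}"

text \<open>Ideals of the dual poset: up-closed subsets of Omega.\<close>
definition dual_ideals :: "'a set \<Rightarrow> ('a \<Rightarrow> 'a \<Rightarrow> bool) \<Rightarrow> 'a set set" where
  "dual_ideals Omega le = {B. B \<subseteq> Omega \<and> (\<forall>i\<in>B. \<forall>j\<in>Omega. le i j \<longrightarrow> j \<in> B)}"

definition phi :: "('a \<Rightarrow> 'a \<Rightarrow> bool) \<Rightarrow> ('a \<Rightarrow> 'k::field) \<Rightarrow> ('a \<Rightarrow> 'k) \<Rightarrow> 'a set \<Rightarrow> 'a set \<Rightarrow> 'k" where
  "phi le tau eta D I =
     (if I \<inter> D \<subseteq> maxs le I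
      then (-1) ^ card (I \<inter> D) * (\<Prod>i \<in> I - maxs le I. tau i) * (\<Prod>i \<in> maxs le I - D. eta i)
      else 0)"

definition pi_poly :: "('a \<Rightarrow> 'a \<Rightarrow> bool) \<Rightarrow> ('a \<Rightarrow> 'k::field) \<Rightarrow> ('a \<Rightarrow> 'k) \<Rightarrow> 'a set \<Rightarrow> 'a set \<Rightarrow> 'k poly" where
  "pi_poly le tau eta Y D = (\<Sum>I \<in> down_closed_subsets le Y. monom (phi le tau eta D I) (card I))"

definition is_chain :: "('a \<Rightarrow> 'a \<Rightarrow> bool) \<Rightarrow> 'a set \<Rightarrow> bool" where
  "is_chain le C \<longleftrightarrow> (\<forall>a\<in>C. \<forall>b\<in>C. le a b \<or> le b a)"

definition len :: "'a set \<Rightarrow> ('a \<Rightarrow> 'a \<Rightarrow> bool) \<Rightarrow> 'a \<Rightarrow> nat" where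
  "len Omega le y = Max (card ` {C. C \<subseteq> Omega \<and> is_chain le C \<and> y \<in> C \<and> (\<forall>c\<in>C. le c y)})"

definition hierarchical :: "'a set \<Rightarrow> ('a \<Rightarrow> 'a \<Rightarrow> bool) \<Rightarrow> bool" where
  "hierarchical Omega le \<longleftrightarrow>
     (\<forall>u\<in>Omega. \<forall>v\<in>Omega. len Omega le u + 1 \<le> len Omega le v \<longrightarrow> le u v)"

end

theory Submission
  imports Defs
begin

text \<open>For an up-set \<open>D\<close>, a down-set \<open>I\<close> contributes to \<open>\<pi>(\<Omega>, D)\<close> only if \<open>I \<inter> D\<close> consists of
  maximal elements of \<open>I\<close>, which forces \<open>I \<subseteq> (\<Omega> - D) \<union> min D\<close>; that set is itself a down-set
  whose coefficient is a nonzero product of \<open>\<tau>\<close>'s and \<open>\<eta>\<close>'s. Hence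
  \<open>deg \<pi>(\<Omega>, D) = |\<Omega> - D| + |min D|\<close>, and the degree condition says that up-sets of equal
  size have equally many minimal elements.

  Both this condition and hierarchy are characterised by peeling off the layer \<open>T\<close> of maximal
  elements: each holds on \<open>\<Omega>\<close> iff every element outside \<open>T\<close> lies below all of \<open>T\<close> and the same
  property holds on \<open>\<Omega> - T\<close>.\<close>

definition mins :: "('a \<Rightarrow> 'a \<Rightarrow> bool) \<Rightarrow> 'a set \<Rightarrow> 'a set" where
  "mins le Y = {y \<in> Y. \<forall>z\<in>Y. le z y \<longrightarrow> z = y}"

lemma degree_sum_monom_card:
  fixes c :: "'a set \<Rightarrow> 'k::comm_monoid_add"
  assumes fin: "finite F" and I0: "I0 \<in> F" "finite I0" "c I0 \<noteq> 0"
    and below_I0: "\<And>I. I \<in> F \<Longrightarrow> c I \<noteq> 0 \<Longrightarrow> I \<subseteq> I0"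
  shows "degree (\<Sum>I\<in>F. monom (c I) (card I)) = card I0"
proof -
  let ?p = "\<Sum>I\<in>F. monom (c I) (card I)"
  have vanish: "c I = 0" if "I \<in> F - {I0}" "card I0 \<le> card I" for I
    using that below_I0 card_seteq[OF \<open>finite I0\<close>] by blast
  have coeff_high: "coeff ?p n = (if n = card I0 then c I0 else 0)" if "card I0 \<le> n" for n
  proof -
    have "coeff ?p n = (if card I0 = n then c I0 else 0)
        + (\<Sum>I\<in>F - {I0}. if card I = n then c I else 0)"
      by (simp add: coeff_sum sum.remove[OF fin I0(1)])
    also have "(\<Sum>I\<in>F - {I0}. if card I = n then c I else 0) = 0"
      using vanish that by (intro sum.neutral) auto
    finally show ?thesis by auto
  qed
  have "degree ?p \<le> card I0"
    using coeff_high by (intro degree_le) auto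
  moreover have "card I0 \<le> degree ?p"
    using coeff_high I0(3) by (intro le_degree) simp
  ultimately show ?thesis by simp
qed

lemma phi_nonzero_imp_subset:
  assumes I: "I \<in> down_closed_subsets le Omega" and D: "D \<subseteq> Omega"
    and nz: "phi le tau eta D I \<noteq> 0"
  shows "I \<subseteq> (Omega - D) \<union> mins le D"
proof
  fix i assume i: "i \<in> I"
  have I_maxs: "I \<inter> D \<subseteq> maxs le I"
    using nz by (auto simp: phi_def split: if_splits)
  have "i \<in> mins le D" if "i \<in> D"
    unfolding mins_def
  proof (intro CollectI conjI that ballI impI)
    fix z assume "z \<in> D" "le z i"
    then have "z \<in> I"
      using I D i by (auto simp: down_closed_subsets_def)
    then have "z \<in> maxs le I"
      using I_maxs \<open>z \<in> D\<close> by blast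
    then show "z = i" using \<open>le z i\<close> i by (auto simp: maxs_def)
  qed
  then show "i \<in> (Omega - D) \<union> mins le D"
    using I i by (auto simp: down_closed_subsets_def)
qed

lemma Diff_Un_mins_down_closed:
  assumes "D \<in> dual_ideals Omega le"
  shows "(Omega - D) \<union> mins le D \<in> down_closed_subsets le Omega"
  using assms unfolding down_closed_subsets_def dual_ideals_def mins_def by blast

lemma mins_subset_maxs_Diff_Un_mins:
  assumes "D \<in> dual_ideals Omega le"
  shows "mins le D \<subseteq> maxs le ((Omega - D) \<union> mins le D)"
  using assms unfolding dual_ideals_def mins_def maxs_def by blast

lemma phi_Diff_Un_mins_nonzero:
  assumes fin: "finite Omega" and D: "D \<in> dual_ideals Omega le"
    and tau: "\<forall>i\<in>Omega. tau i \<noteq> 0" and eta: "\<forall>i\<in>Omega. eta i \<noteq> 0"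
  shows "phi le tau eta D ((Omega - D) \<union> mins le D) \<noteq> 0"
proof -
  let ?I = "(Omega - D) \<union> mins le D"
  have "?I \<subseteq> Omega" and I_Int_D: "?I \<inter> D = mins le D"
    using D by (auto simp: dual_ideals_def mins_def)
  then have "finite ?I"
    using fin finite_subset by blast
  moreover have "maxs le ?I \<subseteq> ?I"
    by (auto simp: maxs_def)
  ultimately have "finite (?I - maxs le ?I)" "finite (maxs le ?I - D)"
    using finite_subset by blast+
  then have "(\<Prod>i \<in> ?I - maxs le ?I. tau i) \<noteq> 0" "(\<Prod>i \<in> maxs le ?I - D. eta i) \<noteq> 0"
    using \<open>?I \<subseteq> Omega\<close> \<open>maxs le ?I \<subseteq> ?I\<close> tau eta by (auto simp only: prod_zero_iff)
  then show ?thesis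
    using mins_subset_maxs_Diff_Un_mins[OF D] by (simp add: phi_def I_Int_D)
qed

lemma degree_pi_poly:
  assumes fin: "finite Omega" and D: "D \<in> dual_ideals Omega le"
    and tau: "\<forall>i\<in>Omega. tau i \<noteq> 0" and eta: "\<forall>i\<in>Omega. eta i \<noteq> 0"
  shows "degree (pi_poly le tau eta Omega D) = card (Omega - D) + card (mins le D)"
proof -
  have "D \<subseteq> Omega" using D by (simp add: dual_ideals_def)
  then have "finite ((Omega - D) \<union> mins le D)"
    using fin by (auto simp: mins_def intro: finite_subset)
  moreover have "finite (down_closed_subsets le Omega)"
    using fin by (auto simp: down_closed_subsets_def)
  ultimately have "degree (pi_poly le tau eta Omega D) = card ((Omega - D) \<union> mins le D)"
    unfolding pi_poly_def
    using fin Diff_Un_mins_down_closed[OF D] phi_Diff_Un_mins_nonzero[OF fin D tau eta]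
      phi_nonzero_imp_subset[of _ le Omega D tau eta] \<open>D \<subseteq> Omega\<close>
    by (intro degree_sum_monom_card) auto
  also have "\<dots> = card (Omega - D) + card (mins le D)"
    using fin \<open>D \<subseteq> Omega\<close> by (intro card_Un_disjoint) (auto simp: mins_def intro: finite_subset)
  finally show ?thesis .
qed

lemma is_poset_subset: "is_poset Omega le \<Longrightarrow> A \<subseteq> Omega \<Longrightarrow> is_poset A le"
  unfolding is_poset_def by blast

lemma maxs_nonempty:
  assumes "finite A" and "A \<noteq> {}" and po: "is_poset A le"
  shows "maxs le A \<noteq> {}"
proof -
  have "asymp_on A (\<lambda>x y. le x y \<and> x \<noteq> y)" "transp_on A (\<lambda>x y. le x y \<and> x \<noteq> y)"
    using po unfolding is_poset_def asymp_on_def transp_on_def by blast+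
  from Finite_Set.bex_max_element[OF assms(1) this assms(2)]
  show ?thesis unfolding maxs_def by blast
qed

definition chains_topped_by :: "'a set \<Rightarrow> ('a \<Rightarrow> 'a \<Rightarrow> bool) \<Rightarrow> 'a \<Rightarrow> 'a set set" where
  "chains_topped_by Omega le y = {C. C \<subseteq> Omega \<and> is_chain le C \<and> y \<in> C \<and> (\<forall>c\<in>C. le c y)}"

lemma len_eq_Max: "len Omega le y = Max (card ` chains_topped_by Omega le y)"
  by (simp add: len_def chains_topped_by_def)

lemma finite_chains_topped_by: "finite Omega \<Longrightarrow> finite (chains_topped_by Omega le y)"
  by (rule finite_subset[of _ "Pow Omega"]) (auto simp: chains_topped_by_def)

lemma card_le_len:
  "finite Omega \<Longrightarrow> C \<in> chains_topped_by Omega le y \<Longrightarrow> card C \<le> len Omega le y"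
  unfolding len_eq_Max by (rule Max_ge) (auto simp: finite_chains_topped_by)

lemma len_attained:
  assumes "finite Omega" and "is_poset Omega le" and "y \<in> Omega"
  obtains C where "C \<in> chains_topped_by Omega le y" and "card C = len Omega le y"
proof -
  have "{y} \<in> chains_topped_by Omega le y"
    using assms(2,3) by (auto simp: chains_topped_by_def is_chain_def is_poset_def)
  then have "len Omega le y \<in> card ` chains_topped_by Omega le y"
    unfolding len_eq_Max using assms(1) by (intro Max_in) (auto simp: finite_chains_topped_by)
  then show ?thesis using that by (auto simp: image_iff)
qed

lemma len_strict_mono:
  assumes fin: "finite Omega" and po: "is_poset Omega le"
    and x: "x \<in> Omega" and y: "y \<in> Omega" and "le x y" "x \<noteq> y"
  shows "len Omega le x < len Omega le y"
proof -
  obtain C where C: "C \<in> chains_topped_by Omega le x" "card C = len Omega le x"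
    using len_attained[OF fin po x] .
  then have CO: "C \<subseteq> Omega" and chain: "is_chain le C" and below_x: "\<forall>c\<in>C. le c x"
    by (auto simp: chains_topped_by_def)
  have below_y: "\<forall>c\<in>insert y C. le c y"
    using below_x CO po x y \<open>le x y\<close> unfolding is_poset_def by blast
  then have "insert y C \<in> chains_topped_by Omega le y"
    using CO chain y unfolding chains_topped_by_def is_chain_def by blast
  moreover have "y \<notin> C"
    using below_x CO po x y \<open>le x y\<close> \<open>x \<noteq> y\<close> unfolding is_poset_def by blast
  moreover have "finite C"
    using CO fin by (rule finite_subset)
  ultimately have "Suc (card C) \<le> len Omega le y"
    using card_le_len[OF fin] by fastforce
  with C show ?thesis by simp
qed

lemma len_Diff_maxs:
  assumes "y \<in> Omega - maxs le Omega"
  shows "len (Omega - maxs le Omega) le y = len Omega le y"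
proof -
  have "chains_topped_by (Omega - maxs le Omega) le y = chains_topped_by Omega le y"
    using assms unfolding chains_topped_by_def maxs_def by blast
  then show ?thesis by (simp add: len_eq_Max)
qed

definition maxs_above_rest :: "'a set \<Rightarrow> ('a \<Rightarrow> 'a \<Rightarrow> bool) \<Rightarrow> bool" where
  "maxs_above_rest Omega le \<longleftrightarrow> (\<forall>x\<in>Omega - maxs le Omega. \<forall>t\<in>maxs le Omega. le x t)"

lemma len_maxs_le:
  assumes fin: "finite Omega" and po: "is_poset Omega le" and above: "maxs_above_rest Omega le"
    and t: "t \<in> maxs le Omega" and t': "t' \<in> maxs le Omega"
  shows "len Omega le t \<le> len Omega le t'"
proof -
  obtain C where C: "C \<in> chains_topped_by Omega le t" "card C = len Omega le t"
    using len_attained[OF fin po] t by (auto simp: maxs_def)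
  then have CO: "C \<subseteq> Omega" and "t \<in> C" and chain: "is_chain le C"
    by (auto simp: chains_topped_by_def)
  have rest: "C - {t} \<subseteq> Omega - maxs le Omega"
    using C t by (auto simp: chains_topped_by_def maxs_def)
  then have "\<forall>c\<in>C - {t}. le c t'"
    using above t' by (auto simp: maxs_above_rest_def)
  moreover have "le t' t'" "t' \<in> Omega"
    using po t' by (auto simp: is_poset_def maxs_def)
  ultimately have "insert t' (C - {t}) \<in> chains_topped_by Omega le t'"
    using CO chain unfolding chains_topped_by_def is_chain_def by blast
  then have "card (insert t' (C - {t})) \<le> len Omega le t'"
    by (rule card_le_len[OF fin])
  moreover have "card (insert t' (C - {t})) = card C"
  proof -
    have "finite C"
      using CO fin by (rule finite_subset)
    then have "card (insert t' (C - {t})) = Suc (card (C - {t}))"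
      using rest t' by (intro card_insert_disjoint) auto
    also have "\<dots> = card C"
      using \<open>finite C\<close> \<open>t \<in> C\<close> by (rule card_Suc_Diff1)
    finally show ?thesis .
  qed
  ultimately show ?thesis
    using C by simp
qed

lemma hierarchical_imp_maxs_above_rest:
  assumes fin: "finite Omega" and po: "is_poset Omega le" and hier: "hierarchical Omega le"
  shows "maxs_above_rest Omega le"
  unfolding maxs_above_rest_def
proof (intro ballI)
  fix x t assume x: "x \<in> Omega - maxs le Omega" and t: "t \<in> maxs le Omega"
  then obtain y where y: "y \<in> Omega" "le x y" "y \<noteq> x" and "t \<in> Omega"
    by (auto simp: maxs_def)
  show "le x t"
  proof (cases "len Omega le x + 1 \<le> len Omega le t")
    case True
    then show ?thesis using hier x \<open>t \<in> Omega\<close> by (auto simp: hierarchical_def)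
  next
    case False
    moreover have "len Omega le x < len Omega le y"
      using len_strict_mono[OF fin po _ y(1,2)] x y(3) by auto
    ultimately have "le t y"
      using hier \<open>t \<in> Omega\<close> y(1) unfolding hierarchical_def by fastforce
    then have "y = t"
      using t y(1) by (auto simp: maxs_def)
    then show ?thesis using y(2) by simp
  qed
qed

lemma hierarchical_iff_maxs_above_rest:
  assumes fin: "finite Omega" and po: "is_poset Omega le"
  shows "hierarchical Omega le \<longleftrightarrow>
    maxs_above_rest Omega le \<and> hierarchical (Omega - maxs le Omega) le"
proof
  assume hier: "hierarchical Omega le"
  then show "maxs_above_rest Omega le \<and> hierarchical (Omega - maxs le Omega) le"
    using hierarchical_imp_maxs_above_rest[OF fin po] len_Diff_maxs[of _ Omega le]
    by (auto simp: hierarchical_def)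
next
  assume "maxs_above_rest Omega le \<and> hierarchical (Omega - maxs le Omega) le"
  then have above: "maxs_above_rest Omega le" and hier: "hierarchical (Omega - maxs le Omega) le"
    by auto
  show "hierarchical Omega le"
    unfolding hierarchical_def
  proof (intro ballI impI)
    fix u v assume u: "u \<in> Omega" and v: "v \<in> Omega"
      and len_uv: "len Omega le u + 1 \<le> len Omega le v"
    consider "u \<in> maxs le Omega" "v \<in> maxs le Omega"
      | "u \<notin> maxs le Omega" "v \<in> maxs le Omega"
      | "u \<in> maxs le Omega" "v \<notin> maxs le Omega"
      | "u \<notin> maxs le Omega" "v \<notin> maxs le Omega"
      by blast
    then show "le u v"
    proof cases
      case 1
      with len_maxs_le[OF fin po above] len_uv show ?thesis by fastforce
    next
      case 2
      with above u show ?thesis by (auto simp: maxs_above_rest_def)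
    next
      case 3
      with above v have "le v u" "v \<noteq> u" by (auto simp: maxs_above_rest_def)
      with len_strict_mono[OF fin po v u] len_uv show ?thesis by simp
    next
      case 4
      with hier u v len_uv len_Diff_maxs[of _ Omega le] show ?thesis by (auto simp: hierarchical_def)
    qed
  qed
qed

definition mins_determined_by_card :: "'a set \<Rightarrow> ('a \<Rightarrow> 'a \<Rightarrow> bool) \<Rightarrow> bool" where
  "mins_determined_by_card Omega le \<longleftrightarrow>
    (\<forall>B\<in>dual_ideals Omega le. \<forall>D\<in>dual_ideals Omega le.
       card B = card D \<longrightarrow> card (mins le B) = card (mins le D))"

lemma mins_subset_maxs: "D \<subseteq> maxs le Omega \<Longrightarrow> mins le D = D"
  by (auto simp: mins_def maxs_def)

lemma maxs_in_dual_ideals: "maxs le Omega \<in> dual_ideals Omega le"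
  by (auto simp: maxs_def dual_ideals_def)

lemma Un_maxs_in_dual_ideals:
  "D \<in> dual_ideals (Omega - maxs le Omega) le \<Longrightarrow> D \<union> maxs le Omega \<in> dual_ideals Omega le"
  unfolding dual_ideals_def maxs_def by blast

lemma Diff_maxs_in_dual_ideals:
  "D \<in> dual_ideals Omega le \<Longrightarrow> D - maxs le Omega \<in> dual_ideals (Omega - maxs le Omega) le"
  unfolding dual_ideals_def by blast

lemma maxs_subset_dual_ideal:
  assumes "maxs_above_rest Omega le" and "D \<in> dual_ideals Omega le" and "\<not> D \<subseteq> maxs le Omega"
  shows "maxs le Omega \<subseteq> D"
  using assms unfolding maxs_above_rest_def dual_ideals_def maxs_def by blast

lemma mins_Un_maxs:
  assumes "maxs_above_rest Omega le" and "D \<subseteq> Omega - maxs le Omega" and "D \<noteq> {}"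
  shows "mins le (D \<union> maxs le Omega) = mins le D"
  using assms unfolding maxs_above_rest_def mins_def maxs_def by blast

lemma card_Un_maxs:
  "finite Omega \<Longrightarrow> D \<subseteq> Omega - maxs le Omega \<Longrightarrow>
    card (D \<union> maxs le Omega) = card D + card (maxs le Omega)"
  by (intro card_Un_disjoint) (auto simp: maxs_def intro: finite_subset)

lemma mins_determined_imp_maxs_above_rest:
  assumes fin: "finite Omega" and po: "is_poset Omega le"
    and det: "mins_determined_by_card Omega le"
  shows "maxs_above_rest Omega le"
  unfolding maxs_above_rest_def
proof (intro ballI, rule ccontr)
  fix x0 t assume x0: "x0 \<in> Omega - maxs le Omega" and t: "t \<in> maxs le Omega" and "\<not> le x0 t"
  define S where "S = {x \<in> Omega - maxs le Omega. \<not> le x t}"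
  have "maxs le S \<noteq> {}"
    using x0 \<open>\<not> le x0 t\<close> fin by (intro maxs_nonempty is_poset_subset[OF po]) (auto simp: S_def)
  then obtain x where x: "x \<in> maxs le S" by blast
  then have "x \<in> Omega" "x \<notin> maxs le Omega" "\<not> le x t"
    by (auto simp: maxs_def S_def)
  have above_x: "z \<in> maxs le Omega - {t}" if z: "z \<in> Omega" "le x z" "z \<noteq> x" for z
  proof -
    have "z \<notin> S" using x z by (auto simp: maxs_def)
    moreover have "t \<in> Omega" using t by (simp add: maxs_def)
    ultimately have "z \<in> maxs le Omega"
      using po z \<open>x \<in> Omega\<close> \<open>\<not> le x t\<close> unfolding S_def is_poset_def by blast
    moreover have "z \<noteq> t" using z \<open>\<not> le x t\<close> by blast
    ultimately show ?thesis by blast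
  qed
  text \<open>\<open>D\<close> is an up-set of the same size as \<open>T\<close>, but the elements above \<open>x\<close> are not minimal
    in it, whereas every element of the up-set \<open>T\<close> is.\<close>
  define D where "D = insert x (maxs le Omega - {t})"
  have D_ideal: "D \<in> dual_ideals Omega le"
    using above_x \<open>x \<in> Omega\<close> unfolding D_def dual_ideals_def maxs_def by blast
  have "finite (maxs le Omega)"
    using fin by (simp add: maxs_def)
  then have "card D = Suc (card (maxs le Omega - {t}))"
    using \<open>x \<notin> maxs le Omega\<close> by (simp add: D_def)
  also have "\<dots> = card (maxs le Omega)"
    using \<open>finite (maxs le Omega)\<close> t by (rule card_Suc_Diff1)
  finally have card_D: "card D = card (maxs le Omega)" .
  obtain y where "y \<in> Omega" "le x y" "y \<noteq> x"
    using \<open>x \<in> Omega\<close> \<open>x \<notin> maxs le Omega\<close> by (auto simp: maxs_def)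
  then have "y \<in> D - mins le D"
    using above_x by (auto simp: D_def mins_def)
  then have "card (mins le D) < card D"
    using \<open>finite (maxs le Omega)\<close> by (intro psubset_card_mono) (auto simp: D_def mins_def)
  moreover have "card (mins le D) = card (mins le (maxs le Omega))"
    using det D_ideal maxs_in_dual_ideals[of le Omega] card_D
    unfolding mins_determined_by_card_def by blast
  ultimately show False
    using card_D mins_subset_maxs[of "maxs le Omega" le Omega] by simp
qed

lemma dual_ideal_not_subset_maxs:
  assumes fin: "finite Omega" and above: "maxs_above_rest Omega le"
    and B: "B \<in> dual_ideals Omega le" and not_maxs: "\<not> B \<subseteq> maxs le Omega"
  shows "card (maxs le Omega) < card B"
    and "card B = card (B - maxs le Omega) + card (maxs le Omega)"
    and "mins le B = mins le (B - maxs le Omega)"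
proof -
  have B_eq: "(B - maxs le Omega) \<union> maxs le Omega = B"
    using maxs_subset_dual_ideal[OF above B not_maxs] by blast
  have rest: "B - maxs le Omega \<subseteq> Omega - maxs le Omega"
    using B by (auto simp: dual_ideals_def)
  show card_B: "card B = card (B - maxs le Omega) + card (maxs le Omega)"
    using card_Un_maxs[OF fin rest] unfolding B_eq .
  have "B - maxs le Omega \<noteq> {}"
    using not_maxs by blast
  moreover have "finite (B - maxs le Omega)"
    using rest fin by (auto intro: finite_subset)
  ultimately show "card (maxs le Omega) < card B"
    unfolding card_B by (simp add: card_gt_0_iff)
  show "mins le B = mins le (B - maxs le Omega)"
    using mins_Un_maxs[OF above rest \<open>B - maxs le Omega \<noteq> {}\<close>] unfolding B_eq .
qed

lemma mins_determined_by_card_Diff_maxs: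
  assumes fin: "finite Omega" and above: "maxs_above_rest Omega le"
    and det: "mins_determined_by_card Omega le"
  shows "mins_determined_by_card (Omega - maxs le Omega) le"
  unfolding mins_determined_by_card_def
proof (intro ballI impI)
  fix B D assume B: "B \<in> dual_ideals (Omega - maxs le Omega) le"
    and D: "D \<in> dual_ideals (Omega - maxs le Omega) le" and card_eq: "card B = card D"
  have rest: "B \<subseteq> Omega - maxs le Omega" "D \<subseteq> Omega - maxs le Omega"
    using B D by (auto simp: dual_ideals_def)
  then have "finite B" "finite D"
    using fin by (auto intro: finite_subset)
  show "card (mins le B) = card (mins le D)"
  proof (cases "B = {}")
    case True
    then show ?thesis using card_eq \<open>finite D\<close> by simp
  next
    case False
    then have "D \<noteq> {}" using card_eq \<open>finite B\<close> by auto
    have "card (B \<union> maxs le Omega) = card (D \<union> maxs le Omega)"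
      using card_eq card_Un_maxs[OF fin] rest by simp
    then have "card (mins le (B \<union> maxs le Omega)) = card (mins le (D \<union> maxs le Omega))"
      using det Un_maxs_in_dual_ideals[OF B] Un_maxs_in_dual_ideals[OF D]
      unfolding mins_determined_by_card_def by blast
    then show ?thesis
      using mins_Un_maxs[OF above] rest False \<open>D \<noteq> {}\<close> by simp
  qed
qed

lemma mins_determined_by_card_if_maxs_above_rest:
  assumes fin: "finite Omega" and above: "maxs_above_rest Omega le"
    and det: "mins_determined_by_card (Omega - maxs le Omega) le"
  shows "mins_determined_by_card Omega le"
  unfolding mins_determined_by_card_def
proof (intro ballI impI)
  fix B D assume B: "B \<in> dual_ideals Omega le" and D: "D \<in> dual_ideals Omega le"
    and card_eq: "card B = card D"
  have "finite (maxs le Omega)"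
    using fin by (simp add: maxs_def)
  note split_B = dual_ideal_not_subset_maxs[OF fin above B]
    and split_D = dual_ideal_not_subset_maxs[OF fin above D]
  consider "B \<subseteq> maxs le Omega" "D \<subseteq> maxs le Omega"
    | "\<not> B \<subseteq> maxs le Omega" "\<not> D \<subseteq> maxs le Omega"
    | "B \<subseteq> maxs le Omega" "\<not> D \<subseteq> maxs le Omega"
    | "\<not> B \<subseteq> maxs le Omega" "D \<subseteq> maxs le Omega"
    by blast
  then show "card (mins le B) = card (mins le D)"
  proof cases
    case 1
    then show ?thesis using card_eq by (simp add: mins_subset_maxs)
  next
    case 2
    then have "card (B - maxs le Omega) = card (D - maxs le Omega)"
      using card_eq split_B(2) split_D(2) by simp
    then have "card (mins le (B - maxs le Omega)) = card (mins le (D - maxs le Omega))"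
      using det Diff_maxs_in_dual_ideals[OF B] Diff_maxs_in_dual_ideals[OF D]
      unfolding mins_determined_by_card_def by blast
    then show ?thesis
      using split_B(3) split_D(3) 2 by simp
  next
    case 3
    then have "card B \<le> card (maxs le Omega)"
      using \<open>finite (maxs le Omega)\<close> by (simp add: card_mono)
    with 3 split_D(1) card_eq show ?thesis by simp
  next
    case 4
    then have "card D \<le> card (maxs le Omega)"
      using \<open>finite (maxs le Omega)\<close> by (simp add: card_mono)
    with 4 split_B(1) card_eq show ?thesis by simp
  qed
qed

lemma mins_determined_by_card_iff_maxs_above_rest:
  assumes fin: "finite Omega" and po: "is_poset Omega le"
  shows "mins_determined_by_card Omega le \<longleftrightarrow>
    maxs_above_rest Omega le \<and> mins_determined_by_card (Omega - maxs le Omega) le"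
  using mins_determined_imp_maxs_above_rest[OF fin po] mins_determined_by_card_Diff_maxs[OF fin]
    mins_determined_by_card_if_maxs_above_rest[OF fin] by blast

lemma hierarchical_iff_mins_determined_by_card:
  assumes "finite Omega" and "is_poset Omega le"
  shows "hierarchical Omega le \<longleftrightarrow> mins_determined_by_card Omega le"
  using assms
proof (induction "card Omega" arbitrary: Omega rule: less_induct)
  case less
  show ?case
  proof (cases "Omega = {}")
    case True
    then show ?thesis
      by (auto simp: hierarchical_def mins_determined_by_card_def dual_ideals_def)
  next
    case False
    let ?R = "Omega - maxs le Omega"
    have "maxs le Omega \<noteq> {}"
      using maxs_nonempty less.prems False by blast
    then have "card ?R < card Omega"
      using less.prems(1) by (intro psubset_card_mono) (auto simp: maxs_def)
    moreover have "finite ?R" "is_poset ?R le"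
      using less.prems(1) is_poset_subset[OF less.prems(2)] by auto
    ultimately have "hierarchical ?R le \<longleftrightarrow> mins_determined_by_card ?R le"
      using less.hyps by blast
    then show ?thesis
      using hierarchical_iff_maxs_above_rest[OF less.prems]
        mins_determined_by_card_iff_maxs_above_rest[OF less.prems] by blast
  qed
qed

theorem proposition3p2:
  fixes Omega :: "'a set" and le :: "'a \<Rightarrow> 'a \<Rightarrow> bool"
    and tau eta :: "'a \<Rightarrow> 'k::field"
  assumes "finite Omega" and "is_poset Omega le"
    and "\<forall>i\<in>Omega. tau i \<noteq> 0" and "\<forall>i\<in>Omega. eta i \<noteq> 0"
  shows "hierarchical Omega le \<longleftrightarrow>
    (\<forall>B\<in>dual_ideals Omega le. \<forall>D\<in>dual_ideals Omega le.
       card B = card D \<longrightarrow>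
       degree (pi_poly le tau eta Omega B) = degree (pi_poly le tau eta Omega D))"
proof -
  have "degree (pi_poly le tau eta Omega B) = degree (pi_poly le tau eta Omega D)
      \<longleftrightarrow> card (mins le B) = card (mins le D)"
    if B: "B \<in> dual_ideals Omega le" and D: "D \<in> dual_ideals Omega le" and "card B = card D"
    for B D
  proof -
    have "B \<subseteq> Omega" "D \<subseteq> Omega"
      using B D by (auto simp: dual_ideals_def)
    then have "card (Omega - B) = card (Omega - D)"
      using \<open>card B = card D\<close> assms(1) by (simp add: card_Diff_subset finite_subset)
    then show ?thesis
      using degree_pi_poly[OF assms(1) B assms(3,4)] degree_pi_poly[OF assms(1) D assms(3,4)]
      by simp
  qed
  then show ?thesis
    using hierarchical_iff_mins_determined_by_card[OF assms(1,2)]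
    unfolding mins_determined_by_card_def by blast
qed

end
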